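(* Let $\Gamma$ be an imprimitive geodesic-transitive graph. If $\Gamma$ is bipartite, then each halved graph of $\Gamma$ is geodesic-transitive. If $\Gamma$ is antipodal, then its folded graph is geodesic-transitive.
   Context: All graphs are finite, simple, undirected, connected. A geodesic of length $\ell$ is a vertex sequence $(v_0,\dots,v_\ell)$ with consecutive vertices adjacent and $d(v_0,v_\ell)=\ell$; a graph is geodesic-transitive if its automorphism group is transitive on geodesics of each length. For a graph of diameter $d$, the distance-$i$ graph $\Gamma^{(i)}$ joins vertices at distance $i$ in $\Gamma$; $\Gamma$ is imprimitive if some $\Gamma^{(i)}$, $1\le i\le d$, is disconnected. For a connected bipartite graph of diameter $\ge2$, a halved graph is the graph induced by $\Gamma^{(2)}$ on one of the two parts. A graph of diameter $d\ge2$ is antipodal if $\Gamma^{(d)}$ is a disjoint union of cliques (i.e. being equal or at distance $d$ is an equivalence relation); its folded graph has these equivalence classes as vertices, two classes being adjacent iff some vertex of one is adjacent in $\Gamma$ to some vertex of the other. *)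

theory Defs
  imports Main
begin

definition walk :: "'a set \<Rightarrow> ('a \<Rightarrow> 'a \<Rightarrow> bool) \<Rightarrow> 'a list \<Rightarrow> bool" where
  "walk V E xs \<longleftrightarrow> xs \<noteq> [] \<and> set xs \<subseteq> V \<and>
     (\<forall>i. i + 1 < length xs \<longrightarrow> E (xs ! i) (xs ! (i + 1)))"

definition connected_graph :: "'a set \<Rightarrow> ('a \<Rightarrow> 'a \<Rightarrow> bool) \<Rightarrow> bool" where
  "connected_graph V E \<longleftrightarrow>
     (\<forall>u\<in>V. \<forall>v\<in>V. \<exists>xs. walk V E xs \<and> hd xs = u \<and> last xs = v)"

definition gdist :: "'a set \<Rightarrow> ('a \<Rightarrow> 'a \<Rightarrow> bool) \<Rightarrow> 'a \<Rightarrow> 'a \<Rightarrow> nat" where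
  "gdist V E u v = (LEAST n. \<exists>xs. walk V E xs \<and> hd xs = u \<and> last xs = v \<and> length xs = n + 1)"

definition graph :: "'a set \<Rightarrow> ('a \<Rightarrow> 'a \<Rightarrow> bool) \<Rightarrow> bool" where
  "graph V E \<longleftrightarrow> finite V \<and> V \<noteq> {} \<and> (\<forall>u v. E u v \<longrightarrow> u \<in> V \<and> v \<in> V) \<and>
     (\<forall>u v. E u v \<longrightarrow> E v u) \<and> (\<forall>u. \<not> E u u) \<and> connected_graph V E"

definition geodesic :: "'a set \<Rightarrow> ('a \<Rightarrow> 'a \<Rightarrow> bool) \<Rightarrow> 'a list \<Rightarrow> bool" where
  "geodesic V E xs \<longleftrightarrow> walk V E xs \<and> gdist V E (hd xs) (last xs) = length xs - 1"

definition automorphism :: "'a set \<Rightarrow> ('a \<Rightarrow> 'a \<Rightarrow> bool) \<Rightarrow> ('a \<Rightarrow> 'a) \<Rightarrow> bool" where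
  "automorphism V E \<sigma> \<longleftrightarrow> bij_betw \<sigma> V V \<and> (\<forall>u\<in>V. \<forall>v\<in>V. E u v \<longleftrightarrow> E (\<sigma> u) (\<sigma> v))"

definition geodesic_transitive :: "'a set \<Rightarrow> ('a \<Rightarrow> 'a \<Rightarrow> bool) \<Rightarrow> bool" where
  "geodesic_transitive V E \<longleftrightarrow>
     (\<forall>xs ys. geodesic V E xs \<and> geodesic V E ys \<and> length xs = length ys \<longrightarrow>
        (\<exists>\<sigma>. automorphism V E \<sigma> \<and> map \<sigma> xs = ys))"

definition diameter :: "'a set \<Rightarrow> ('a \<Rightarrow> 'a \<Rightarrow> bool) \<Rightarrow> nat" where
  "diameter V E = Max {gdist V E u v | u v. u \<in> V \<and> v \<in> V}"

definition distance_graph :: "'a set \<Rightarrow> ('a \<Rightarrow> 'a \<Rightarrow> bool) \<Rightarrow> nat \<Rightarrow> 'a \<Rightarrow> 'a \<Rightarrow> bool" where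
  "distance_graph V E i u v \<longleftrightarrow> u \<in> V \<and> v \<in> V \<and> gdist V E u v = i"

definition imprimitive :: "'a set \<Rightarrow> ('a \<Rightarrow> 'a \<Rightarrow> bool) \<Rightarrow> bool" where
  "imprimitive V E \<longleftrightarrow>
     (\<exists>i. 1 \<le> i \<and> i \<le> diameter V E \<and> \<not> connected_graph V (distance_graph V E i))"

definition bipartition :: "'a set \<Rightarrow> ('a \<Rightarrow> 'a \<Rightarrow> bool) \<Rightarrow> 'a set \<Rightarrow> 'a set \<Rightarrow> bool" where
  "bipartition V E A B \<longleftrightarrow> A \<union> B = V \<and> A \<inter> B = {} \<and>
     (\<forall>u v. E u v \<longrightarrow> (u \<in> A \<and> v \<in> B) \<or> (u \<in> B \<and> v \<in> A))"

definition bipartite :: "'a set \<Rightarrow> ('a \<Rightarrow> 'a \<Rightarrow> bool) \<Rightarrow> bool" where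
  "bipartite V E \<longleftrightarrow> (\<exists>A B. bipartition V E A B)"

definition halved_adj :: "'a set \<Rightarrow> ('a \<Rightarrow> 'a \<Rightarrow> bool) \<Rightarrow> 'a set \<Rightarrow> 'a \<Rightarrow> 'a \<Rightarrow> bool" where
  "halved_adj V E A u v \<longleftrightarrow> u \<in> A \<and> v \<in> A \<and> gdist V E u v = 2"

definition antipodal_rel :: "'a set \<Rightarrow> ('a \<Rightarrow> 'a \<Rightarrow> bool) \<Rightarrow> ('a \<times> 'a) set" where
  "antipodal_rel V E = {(u, v). u \<in> V \<and> v \<in> V \<and> (u = v \<or> gdist V E u v = diameter V E)}"

definition antipodal :: "'a set \<Rightarrow> ('a \<Rightarrow> 'a \<Rightarrow> bool) \<Rightarrow> bool" where
  "antipodal V E \<longleftrightarrow> 2 \<le> diameter V E \<and> equiv V (antipodal_rel V E)"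

definition folded_vertices :: "'a set \<Rightarrow> ('a \<Rightarrow> 'a \<Rightarrow> bool) \<Rightarrow> 'a set set" where
  "folded_vertices V E = V // antipodal_rel V E"

definition folded_adj :: "'a set \<Rightarrow> ('a \<Rightarrow> 'a \<Rightarrow> bool) \<Rightarrow> 'a set \<Rightarrow> 'a set \<Rightarrow> bool" where
  "folded_adj V E C D \<longleftrightarrow> C \<in> folded_vertices V E \<and> D \<in> folded_vertices V E \<and>
     (\<exists>u\<in>C. \<exists>v\<in>D. E u v)"

end

theory Submission
  imports Defs
begin

text \<open>
  Geodesics of the halved graph and of the folded graph lift to geodesics of \<open>\<Gamma>\<close>. A halved
  geodesic of length \<open>l\<close> becomes a walk of length \<open>2l\<close> in \<open>\<Gamma>\<close> through the middle vertices, and it is a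
  geodesic since distances within a part are exactly twice the halved distances. In an antipodal
  geodesic-transitive graph an edge leaving an antipodal class can be started at any vertex of that
  class, so walks of the folded graph lift to walks of the same length, which are geodesics
  because projecting to the folded graph does not increase distances. Given two geodesics of equal
  length in the derived graph, an automorphism of \<open>\<Gamma>\<close> mapping one lift onto the other induces the
  required automorphism: in the bipartite case it fixes the part of the first vertex and restricts
  to it, in the antipodal case it permutes the antipodal classes.
\<close>

section \<open>Walks and distance\<close>

lemma walk_Nil [simp]: "\<not> walk V E []"
  by (simp add: walk_def)

lemma walk_single [simp]: "walk V E [x] \<longleftrightarrow> x \<in> V"
  by (simp add: walk_def)

lemma walk_Cons2 [simp]: "walk V E (x # y # xs) \<longleftrightarrow> x \<in> V \<and> E x y \<and> walk V E (y # xs)"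
proof -
  have "(\<forall>i. i + 1 < length (x # y # xs) \<longrightarrow> E ((x # y # xs) ! i) ((x # y # xs) ! (i + 1)))
    \<longleftrightarrow> E x y \<and> (\<forall>i. i + 1 < length (y # xs) \<longrightarrow> E ((y # xs) ! i) ((y # xs) ! (i + 1)))"
    (is "?l \<longleftrightarrow> ?r")
  proof
    assume ?l
    then show ?r
      by (metis Suc_eq_plus1 Suc_less_eq length_Cons nth_Cons_0 nth_Cons_Suc zero_less_Suc)
  qed (auto simp: nth_Cons split: nat.split)
  then show ?thesis
    by (auto simp: walk_def)
qed

lemma graph_adjD:
  assumes "graph V E" and "E x y"
  shows "x \<in> V" "y \<in> V" "x \<noteq> y"
  using assms unfolding graph_def by blast+

lemma walk_set: "walk V E xs \<Longrightarrow> set xs \<subseteq> V"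
  by (simp add: walk_def)

lemma walk_hd_in: "walk V E xs \<Longrightarrow> hd xs \<in> V"
  by (cases xs) (auto simp: walk_def)

lemma walk_last_in: "walk V E xs \<Longrightarrow> last xs \<in> V"
  by (cases xs rule: rev_cases) (auto simp: walk_def)

lemma walk_append:
  "xs \<noteq> [] \<Longrightarrow> ys \<noteq> [] \<Longrightarrow>
    walk V E (xs @ ys) \<longleftrightarrow> walk V E xs \<and> walk V E ys \<and> E (last xs) (hd ys)"
proof (induction xs rule: induct_list012)
  case (2 x)
  then show ?case
    by (cases ys) auto
qed auto

lemma walk_map_automorphism:
  assumes "automorphism V E \<sigma>" and "walk V E xs"
  shows "walk V E (map \<sigma> xs)"
proof -
  have bij: "bij_betw \<sigma> V V"
    using assms(1) by (simp add: automorphism_def)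
  have "set (map \<sigma> xs) \<subseteq> V"
    using assms(2) bij_betw_apply[OF bij] by (auto simp: walk_def)
  moreover have "E (\<sigma> (xs ! i)) (\<sigma> (xs ! (i + 1)))" if "i + 1 < length xs" for i
  proof -
    have "xs ! i \<in> V" "xs ! (i + 1) \<in> V"
      using assms(2) that walk_set[of V E xs] by (auto dest: nth_mem)
    moreover have "E (xs ! i) (xs ! (i + 1))"
      using assms(2) that by (simp add: walk_def)
    ultimately show ?thesis
      using assms(1) by (simp add: automorphism_def)
  qed
  ultimately show ?thesis
    using assms(2) by (simp add: walk_def)
qed

lemma gdist_le_walk: "walk V E xs \<Longrightarrow> gdist V E (hd xs) (last xs) \<le> length xs - 1"
  unfolding gdist_def by (rule Least_le) (cases xs, auto)

lemma shortest_geodesic_exists: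
  assumes "connected_graph V E" and "u \<in> V" and "v \<in> V"
  obtains xs where "geodesic V E xs" "hd xs = u" "last xs = v" "length xs = gdist V E u v + 1"
proof -
  obtain xs where "walk V E xs" "hd xs = u" "last xs = v"
    using assms unfolding connected_graph_def by blast
  then have "\<exists>n xs. walk V E xs \<and> hd xs = u \<and> last xs = v \<and> length xs = n + 1"
    by (metis Suc_eq_plus1 length_Suc_conv list.exhaust walk_Nil)
  then have "\<exists>xs. walk V E xs \<and> hd xs = u \<and> last xs = v \<and> length xs = gdist V E u v + 1"
    unfolding gdist_def by (rule LeastI_ex)
  then show ?thesis
    using that by (fastforce simp: geodesic_def)
qed

lemma gdist_triangle:
  assumes "connected_graph V E" and "u \<in> V" "v \<in> V" "w \<in> V"
  shows "gdist V E u w \<le> gdist V E u v + gdist V E v w"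
proof -
  obtain xs where xs: "walk V E xs" "hd xs = u" "last xs = v" "length xs = gdist V E u v + 1"
    using shortest_geodesic_exists[OF assms(1,2,3)] by (metis geodesic_def)
  obtain ys where ys: "walk V E ys" "hd ys = v" "last ys = w" "length ys = gdist V E v w + 1"
    using shortest_geodesic_exists[OF assms(1,3,4)] by (metis geodesic_def)
  show ?thesis
  proof (cases "tl ys")
    case Nil
    then have "ys = [v]"
      using ys by (cases ys) auto
    then show ?thesis
      using ys by simp
  next
    case (Cons y ys')
    then have ys_eq: "ys = v # y # ys'"
      using ys(1,2) by (cases ys) auto
    have "xs \<noteq> []"
      using xs(1) by auto
    then have "walk V E (xs @ y # ys')"
      using xs ys ys_eq by (subst walk_append) auto
    from gdist_le_walk[OF this] show ?thesis
      using \<open>xs \<noteq> []\<close> xs ys ys_eq by simp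
  qed
qed

lemma gdist_eq_0_imp_eq:
  assumes "connected_graph V E" "u \<in> V" "v \<in> V" "gdist V E u v = 0"
  shows "u = v"
  using shortest_geodesic_exists[OF assms(1-3)] assms(4)
  by (metis One_nat_def add_0 last_ConsL length_0_conv length_Suc_conv list.sel(1))

lemma gdist_eq_1_imp_adj:
  assumes "connected_graph V E" "u \<in> V" "v \<in> V" "gdist V E u v = 1"
  shows "E u v"
proof -
  obtain xs where xs: "geodesic V E xs" "hd xs = u" "last xs = v" "length xs = 2"
    using shortest_geodesic_exists[OF assms(1-3)] assms(4) by (metis one_add_one)
  then obtain a b where "xs = [a, b]"
    by (auto simp: length_Suc_conv numeral_2_eq_2)
  then show ?thesis
    using xs by (auto simp: geodesic_def)
qed

lemma gdist_adj_le_1: "u \<in> V \<Longrightarrow> v \<in> V \<Longrightarrow> E u v \<Longrightarrow> gdist V E u v \<le> 1"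
  using gdist_le_walk[of V E "[u, v]"] by simp

lemma finite_gdist_values:
  "finite V \<Longrightarrow> finite {gdist V E u v | u v. u \<in> V \<and> v \<in> V}"
  using finite_image_set2[of "\<lambda>u. u \<in> V" "\<lambda>v. v \<in> V" "gdist V E"] by simp

lemma gdist_le_diameter:
  assumes "finite V" and "u \<in> V" "v \<in> V"
  shows "gdist V E u v \<le> diameter V E"
  unfolding diameter_def
  by (rule Max_ge[OF finite_gdist_values[OF assms(1)]]) (use assms(2,3) in blast)

lemma diameter_attained:
  assumes "finite V" and "V \<noteq> {}"
  obtains a b where "a \<in> V" "b \<in> V" "gdist V E a b = diameter V E"
proof -
  have "{gdist V E u v | u v. u \<in> V \<and> v \<in> V} \<noteq> {}"
    using assms(2) by blast
  then have "diameter V E \<in> {gdist V E u v | u v. u \<in> V \<and> v \<in> V}"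
    unfolding diameter_def by (rule Max_in[OF finite_gdist_values[OF assms(1)]])
  then show ?thesis
    using that by auto
qed

lemma geodesic_append_left:
  assumes "connected_graph V E" and "geodesic V E (xs @ ys)" and "xs \<noteq> []"
  shows "geodesic V E xs"
proof (cases "ys = []")
  case False
  have walks: "walk V E xs" "walk V E ys" "E (last xs) (hd ys)"
    using assms(2,3) False walk_append by (auto simp: geodesic_def)
  have "walk V E (last xs # ys)"
    using walks walk_append[of "[last xs]" ys] False walk_last_in by auto
  from gdist_le_walk[OF this] have tail: "gdist V E (last xs) (last ys) \<le> length ys"
    using False by simp
  have "length xs + length ys - 1 = gdist V E (hd xs) (last ys)"
    using assms(2,3) False by (simp add: geodesic_def)
  also have "\<dots> \<le> gdist V E (hd xs) (last xs) + gdist V E (last xs) (last ys)"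
    using gdist_triangle[OF assms(1)] walks False walk_hd_in walk_last_in by blast
  finally have "length xs - 1 \<le> gdist V E (hd xs) (last xs)"
    using tail by linarith
  then show ?thesis
    using walks gdist_le_walk[of V E xs] by (simp add: geodesic_def)
qed (use assms in simp)

lemma automorphism_inv_into:
  assumes "automorphism V E \<sigma>"
  shows "automorphism V E (inv_into V \<sigma>)"
proof -
  have bij: "bij_betw \<sigma> V V"
    using assms by (simp add: automorphism_def)
  then have "bij_betw (inv_into V \<sigma>) V V"
    by (rule bij_betw_inv_into)
  moreover have "E u v \<longleftrightarrow> E (inv_into V \<sigma> u) (inv_into V \<sigma> v)" if "u \<in> V" "v \<in> V" for u v
    using assms that bij_betw_apply[OF \<open>bij_betw (inv_into V \<sigma>) V V\<close>]
    by (auto simp: automorphism_def bij_betw_inv_into_right[OF bij])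
  ultimately show ?thesis
    by (simp add: automorphism_def)
qed

lemma gdist_automorphism_le:
  assumes "connected_graph V E" "automorphism V E \<sigma>" "u \<in> V" "v \<in> V"
  shows "gdist V E (\<sigma> u) (\<sigma> v) \<le> gdist V E u v"
proof -
  obtain xs where xs: "geodesic V E xs" "hd xs = u" "last xs = v" "length xs = gdist V E u v + 1"
    using shortest_geodesic_exists[OF assms(1,3,4)] .
  then have "walk V E (map \<sigma> xs)" "xs \<noteq> []"
    using walk_map_automorphism[OF assms(2)] by (auto simp: geodesic_def)
  from gdist_le_walk[OF this(1)] show ?thesis
    using xs \<open>xs \<noteq> []\<close> by (simp add: hd_map last_map)
qed

lemma gdist_automorphism:
  assumes "connected_graph V E" "automorphism V E \<sigma>" "u \<in> V" "v \<in> V"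
  shows "gdist V E (\<sigma> u) (\<sigma> v) = gdist V E u v"
proof -
  have bij: "bij_betw \<sigma> V V"
    using assms(2) by (simp add: automorphism_def)
  then have "\<sigma> u \<in> V" "\<sigma> v \<in> V"
    using assms(3,4) bij_betw_apply by fastforce+
  from gdist_automorphism_le[OF assms(1) automorphism_inv_into[OF assms(2)] this]
  have "gdist V E u v \<le> gdist V E (\<sigma> u) (\<sigma> v)"
    using bij assms(3,4) by (simp add: bij_betw_inv_into_left)
  with gdist_automorphism_le[OF assms] show ?thesis
    by simp
qed


section \<open>Halved graphs\<close>

fun every_other :: "'a list \<Rightarrow> 'a list" where
  "every_other [] = []"
| "every_other [x] = [x]"
| "every_other (x # y # xs) = x # every_other xs"

lemma every_other_map: "every_other (map f xs) = map f (every_other xs)"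
  by (induction xs rule: every_other.induct) auto

lemma bipartition_subset: "bipartition V E A B \<Longrightarrow> A \<subseteq> V"
  unfolding bipartition_def by blast

lemma bipartition_adj: "bipartition V E A B \<Longrightarrow> E x y \<Longrightarrow> x \<in> A \<longleftrightarrow> y \<notin> A"
  unfolding bipartition_def by blast

lemma bipartition_walk_parity:
  assumes "bipartition V E A B" and "walk V E xs"
  shows "hd xs \<in> A \<longleftrightarrow> (last xs \<in> A \<longleftrightarrow> odd (length xs))"
  using assms(2)
proof (induction xs rule: induct_list012)
  case (3 x y zs)
  then have "E x y" "y \<in> A \<longleftrightarrow> (last (y # zs) \<in> A \<longleftrightarrow> odd (length (y # zs)))"
    by auto
  with bipartition_adj[OF assms(1) \<open>E x y\<close>] show ?case
    by simp
qed auto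

lemma halved_adjI:
  assumes "bipartition V E A B" and "connected_graph V E"
    and "x \<in> A" "z \<in> A" "x \<noteq> z" and "walk V E [x, y, z]"
  shows "halved_adj V E A x z"
proof -
  have "x \<in> V" "z \<in> V"
    using assms(6) by auto
  moreover have "gdist V E x z \<le> 2"
    using gdist_le_walk[OF assms(6)] by simp
  moreover have "\<not> E x z"
    using bipartition_adj[OF assms(1)] assms(3,4) by blast
  ultimately show ?thesis
    using assms(3-5) gdist_eq_0_imp_eq[OF assms(2)] gdist_eq_1_imp_adj[OF assms(2)]
    by (fastforce simp: halved_adj_def)
qed

lemma halved_adjE:
  assumes "connected_graph V E" and "A \<subseteq> V" and "halved_adj V E A x z"
  obtains y where "walk V E [x, y, z]"
proof -
  obtain ps where ps: "geodesic V E ps" "hd ps = x" "last ps = z" "length ps = 3"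
    using assms shortest_geodesic_exists[OF assms(1), of x z]
    by (auto simp: halved_adj_def subset_iff)
  then obtain a b c where "ps = [a, b, c]"
    by (auto simp: length_Suc_conv numeral_3_eq_3)
  then show ?thesis
    using ps that by (auto simp: geodesic_def)
qed

lemma halved_walk_of_walk:
  assumes bip: "bipartition V E A B" and conn: "connected_graph V E"
    and "walk V E ys" "hd ys \<in> A" "last ys \<in> A"
  shows "\<exists>zs. walk A (halved_adj V E A) zs \<and> hd zs = hd ys \<and> last zs = last ys
           \<and> 2 * (length zs - 1) \<le> length ys - 1"
  using assms(3-)
proof (induction ys rule: every_other.induct)
  case (2 x)
  then show ?case
    by (intro exI[of _ "[x]"]) simp
next
  case (3 x y r)
  then have "x \<in> A" "E x y" "walk V E (y # r)"
    by auto
  then have "y \<notin> A"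
    using bipartition_adj[OF bip] by blast
  show ?case
  proof (cases r)
    case Nil
    with 3 \<open>y \<notin> A\<close> show ?thesis
      by simp
  next
    case (Cons z r')
    then have "E y z" "walk V E r"
      using \<open>walk V E (y # r)\<close> by auto
    then have "z \<in> A"
      using bipartition_adj[OF bip] \<open>y \<notin> A\<close> by blast
    have "walk V E [x, y, z]"
      using "3.prems"(1) Cons walk_hd_in[OF \<open>walk V E r\<close>] by auto
    obtain zs where zs: "walk A (halved_adj V E A) zs" "hd zs = z" "last zs = last r"
        "2 * (length zs - 1) \<le> length r - 1"
      using "3.IH"[OF \<open>walk V E r\<close>] "3.prems"(3) Cons \<open>z \<in> A\<close> by auto
    show ?thesis
    proof (cases "x = z")
      case True
      then show ?thesis
        using zs Cons by (intro exI[of _ zs]) auto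
    next
      case False
      then have "halved_adj V E A x z"
        using halved_adjI[OF bip conn \<open>x \<in> A\<close> \<open>z \<in> A\<close> _ \<open>walk V E [x, y, z]\<close>] by blast
      moreover obtain zs' where "zs = z # zs'"
        using zs(1,2) by (cases zs) auto
      ultimately show ?thesis
        using zs Cons \<open>x \<in> A\<close> by (intro exI[of _ "x # zs"]) auto
    qed
  qed
qed simp

lemma walk_of_halved_walk:
  assumes conn: "connected_graph V E" and "A \<subseteq> V" and "walk A (halved_adj V E A) xs"
  shows "\<exists>ys. walk V E ys \<and> length ys = 2 * length xs - 1 \<and> every_other ys = xs
           \<and> hd ys = hd xs \<and> last ys = last xs"
  using assms(3)
proof (induction xs rule: induct_list012)
  case (2 x)
  then show ?case
    using assms(2) by (intro exI[of _ "[x]"]) auto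
next
  case (3 x z zs)
  then obtain y where "walk V E [x, y, z]"
    using halved_adjE[OF conn assms(2)] by auto
  moreover obtain ys where ys: "walk V E ys" "length ys = 2 * length (z # zs) - 1"
      "every_other ys = z # zs" "hd ys = z" "last ys = last (z # zs)"
    using 3 by auto
  moreover obtain ys' where "ys = z # ys'"
    using ys(1,4) by (cases ys) auto
  ultimately show ?case
    by (intro exI[of _ "x # y # ys"]) auto
qed simp

lemma connected_halved:
  assumes "bipartition V E A B" and "connected_graph V E"
  shows "connected_graph A (halved_adj V E A)"
  unfolding connected_graph_def
proof (intro ballI)
  fix u v assume "u \<in> A" "v \<in> A"
  moreover have "A \<subseteq> V"
    using assms(1) by (rule bipartition_subset)
  ultimately obtain ys where "walk V E ys" "hd ys = u" "last ys = v"
    using assms(2) unfolding connected_graph_def by blast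
  with halved_walk_of_walk[OF assms] \<open>u \<in> A\<close> \<open>v \<in> A\<close>
  show "\<exists>zs. walk A (halved_adj V E A) zs \<and> hd zs = u \<and> last zs = v"
    by blast
qed

lemma gdist_halved:
  assumes bip: "bipartition V E A B" and conn: "connected_graph V E" and "u \<in> A" "v \<in> A"
  shows "gdist V E u v = 2 * gdist A (halved_adj V E A) u v"
proof (rule antisym)
  have "A \<subseteq> V"
    using bip by (rule bipartition_subset)
  obtain zs where zs: "geodesic A (halved_adj V E A) zs" "hd zs = u" "last zs = v"
      "length zs = gdist A (halved_adj V E A) u v + 1"
    using shortest_geodesic_exists[OF connected_halved[OF bip conn] assms(3,4)] .
  then obtain ys where "walk V E ys" "length ys = 2 * length zs - 1" "hd ys = u" "last ys = v"
    using walk_of_halved_walk[OF conn \<open>A \<subseteq> V\<close>] by (metis geodesic_def)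
  with gdist_le_walk[of V E ys] zs(4)
  show "gdist V E u v \<le> 2 * gdist A (halved_adj V E A) u v"
    by simp
  obtain ys where ys: "geodesic V E ys" "hd ys = u" "last ys = v" "length ys = gdist V E u v + 1"
    using shortest_geodesic_exists[OF conn] assms(3,4) \<open>A \<subseteq> V\<close> by blast
  then obtain zs where "walk A (halved_adj V E A) zs" "hd zs = u" "last zs = v"
      "2 * (length zs - 1) \<le> length ys - 1"
    using halved_walk_of_walk[OF bip conn] assms(3,4) by (metis geodesic_def)
  with gdist_le_walk[of A "halved_adj V E A" zs] ys(4)
  show "2 * gdist A (halved_adj V E A) u v \<le> gdist V E u v"
    by simp
qed

lemma geodesic_halved_lift:
  assumes bip: "bipartition V E A B" and conn: "connected_graph V E"
    and "geodesic A (halved_adj V E A) xs"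
  shows "\<exists>ys. geodesic V E ys \<and> length ys = 2 * length xs - 1 \<and> every_other ys = xs"
proof -
  have "A \<subseteq> V"
    using bip by (rule bipartition_subset)
  have xs: "walk A (halved_adj V E A) xs"
      "gdist A (halved_adj V E A) (hd xs) (last xs) = length xs - 1"
    using assms(3) by (simp_all add: geodesic_def)
  obtain ys where ys: "walk V E ys" "length ys = 2 * length xs - 1" "every_other ys = xs"
      "hd ys = hd xs" "last ys = last xs"
    using walk_of_halved_walk[OF conn \<open>A \<subseteq> V\<close> xs(1)] by blast
  have "gdist V E (hd ys) (last ys) = length ys - 1"
    using gdist_halved[OF bip conn walk_hd_in[OF xs(1)] walk_last_in[OF xs(1)]] xs(2) ys
    by (cases xs) auto
  then show ?thesis
    using ys by (auto simp: geodesic_def)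
qed

lemma automorphism_preserves_part:
  assumes bip: "bipartition V E A B" and conn: "connected_graph V E"
    and aut: "automorphism V E \<sigma>" and "a \<in> A" "\<sigma> a \<in> A" and "v \<in> V"
  shows "\<sigma> v \<in> A \<longleftrightarrow> v \<in> A"
proof -
  have "a \<in> V"
    using bipartition_subset[OF bip] \<open>a \<in> A\<close> by blast
  then obtain zs where zs: "walk V E zs" "hd zs = a" "last zs = v"
    using conn \<open>v \<in> V\<close> unfolding connected_graph_def by blast
  moreover have "walk V E (map \<sigma> zs)"
    using walk_map_automorphism[OF aut zs(1)] .
  moreover have "zs \<noteq> []"
    using zs(1) by auto
  ultimately show ?thesis
    using bipartition_walk_parity[OF bip] \<open>a \<in> A\<close> \<open>\<sigma> a \<in> A\<close>
    by (metis hd_map last_map length_map)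
qed

lemma automorphism_halved:
  assumes bip: "bipartition V E A B" and conn: "connected_graph V E"
    and aut: "automorphism V E \<sigma>" and "a \<in> A" "\<sigma> a \<in> A"
  shows "automorphism A (halved_adj V E A) \<sigma>"
proof -
  have "A \<subseteq> V"
    using bip by (rule bipartition_subset)
  have bij: "bij_betw \<sigma> V V"
    using aut by (simp add: automorphism_def)
  have part: "\<sigma> v \<in> A \<longleftrightarrow> v \<in> A" if "v \<in> V" for v
    using automorphism_preserves_part[OF assms that] .
  have "\<sigma> ` A = A"
  proof
    show "\<sigma> ` A \<subseteq> A"
      using part \<open>A \<subseteq> V\<close> by auto
    show "A \<subseteq> \<sigma> ` A"
      using part \<open>A \<subseteq> V\<close> bij_betw_imp_surj_on[OF bij] by force
  qed
  then have "bij_betw \<sigma> A A"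
    using bij \<open>A \<subseteq> V\<close> by (auto simp: bij_betw_def intro: inj_on_subset)
  moreover have "halved_adj V E A u v \<longleftrightarrow> halved_adj V E A (\<sigma> u) (\<sigma> v)"
    if "u \<in> A" "v \<in> A" for u v
  proof -
    have "\<sigma> u \<in> A" "\<sigma> v \<in> A"
      using that part \<open>A \<subseteq> V\<close> by auto
    moreover have "gdist V E (\<sigma> u) (\<sigma> v) = gdist V E u v"
      using that gdist_automorphism[OF conn aut] \<open>A \<subseteq> V\<close> by auto
    ultimately show ?thesis
      using that by (simp add: halved_adj_def)
  qed
  ultimately show ?thesis
    by (simp add: automorphism_def)
qed

theorem geodesic_transitive_halved:
  assumes "graph V E" and gt: "geodesic_transitive V E" and bip: "bipartition V E A B"
  shows "geodesic_transitive A (halved_adj V E A)"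
  unfolding geodesic_transitive_def
proof (intro allI impI, elim conjE)
  fix xs ys
  assume xs: "geodesic A (halved_adj V E A) xs" and ys: "geodesic A (halved_adj V E A) ys"
    and "length xs = length ys"
  have conn: "connected_graph V E"
    using assms(1) by (simp add: graph_def)
  obtain xs' where xs': "geodesic V E xs'" "length xs' = 2 * length xs - 1" "every_other xs' = xs"
    using geodesic_halved_lift[OF bip conn xs] by blast
  obtain ys' where ys': "geodesic V E ys'" "length ys' = 2 * length ys - 1" "every_other ys' = ys"
    using geodesic_halved_lift[OF bip conn ys] by blast
  obtain \<sigma> where \<sigma>: "automorphism V E \<sigma>" "map \<sigma> xs' = ys'"
    using gt xs' ys' \<open>length xs = length ys\<close> unfolding geodesic_transitive_def by metis
  then have "map \<sigma> xs = ys"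
    using every_other_map[of \<sigma> xs'] xs'(3) ys'(3) by simp
  moreover have "hd xs \<in> A" "xs \<noteq> []"
    using xs walk_hd_in by (auto simp: geodesic_def)
  moreover have "hd ys \<in> A"
    using ys walk_hd_in by (auto simp: geodesic_def)
  ultimately have "automorphism A (halved_adj V E A) \<sigma>"
    using automorphism_halved[OF bip conn \<sigma>(1), of "hd xs"] by (metis hd_map)
  with \<open>map \<sigma> xs = ys\<close> show "\<exists>\<sigma>. automorphism A (halved_adj V E A) \<sigma> \<and> map \<sigma> xs = ys"
    by blast
qed


section \<open>Folded graphs\<close>

lemma quotient_eq_class:
  assumes "equiv A r" and "X \<in> A // r" and "x \<in> X"
  shows "X = r `` {x}"
proof -
  have "x \<in> A"
    using in_quotient_imp_subset[OF assms(1,2)] assms(3) by blast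
  then show ?thesis
    using quotient_eq_iff[OF assms(1,2) quotientI assms(3) equiv_class_self[OF assms(1)]]
      in_quotient_imp_in_rel[OF assms(1,2)] assms(3) by blast
qed

lemma image_equiv_class:
  assumes "equiv V R" and "bij_betw \<sigma> V V"
    and inv: "\<And>u v. u \<in> V \<Longrightarrow> v \<in> V \<Longrightarrow> (\<sigma> u, \<sigma> v) \<in> R \<longleftrightarrow> (u, v) \<in> R"
    and "a \<in> V"
  shows "\<sigma> ` (R `` {a}) = R `` {\<sigma> a}"
proof
  have R: "R \<subseteq> V \<times> V"
    using assms(1) by (rule equiv_type)
  show "\<sigma> ` (R `` {a}) \<subseteq> R `` {\<sigma> a}"
    using R inv \<open>a \<in> V\<close> by blast
  show "R `` {\<sigma> a} \<subseteq> \<sigma> ` (R `` {a})"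
  proof
    fix c assume "c \<in> R `` {\<sigma> a}"
    moreover obtain v where "v \<in> V" "c = \<sigma> v"
      using R calculation bij_betw_imp_surj_on[OF assms(2)] by blast
    ultimately show "c \<in> \<sigma> ` (R `` {a})"
      using inv \<open>a \<in> V\<close> by blast
  qed
qed

lemma bij_betw_image_quotient:
  assumes "equiv V R" and "bij_betw \<sigma> V V"
    and "\<And>u v. u \<in> V \<Longrightarrow> v \<in> V \<Longrightarrow> (\<sigma> u, \<sigma> v) \<in> R \<longleftrightarrow> (u, v) \<in> R"
  shows "bij_betw (image \<sigma>) (V // R) (V // R)"
  unfolding bij_betw_def
proof
  show "inj_on (image \<sigma>) (V // R)"
    using assms(2) in_quotient_imp_subset[OF assms(1)]
    by (auto intro!: inj_onI simp: bij_betw_def inj_on_image_eq_iff)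
  have image_class: "\<sigma> ` (R `` {a}) = R `` {\<sigma> a}" if "a \<in> V" for a
    using image_equiv_class[OF assms that] .
  show "image \<sigma> ` (V // R) = V // R"
  proof
    show "image \<sigma> ` (V // R) \<subseteq> V // R"
    proof (rule image_subsetI)
      fix C assume "C \<in> V // R"
      then obtain a where "C = R `` {a}" "a \<in> V"
        by (rule quotientE)
      then show "\<sigma> ` C \<in> V // R"
        using image_class bij_betw_apply[OF assms(2)] quotientI by metis
    qed
    show "V // R \<subseteq> image \<sigma> ` (V // R)"
    proof
      fix C assume "C \<in> V // R"
      then obtain c where "C = R `` {c}" "c \<in> V"
        by (rule quotientE)
      moreover obtain a where "a \<in> V" "c = \<sigma> a"
        using \<open>c \<in> V\<close> bij_betw_imp_surj_on[OF assms(2)] by blast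
      ultimately show "C \<in> image \<sigma> ` (V // R)"
        using image_class by (auto intro: quotientI)
    qed
  qed
qed

abbreviation antipodal_class :: "'a set \<Rightarrow> ('a \<Rightarrow> 'a \<Rightarrow> bool) \<Rightarrow> 'a \<Rightarrow> 'a set" where
  "antipodal_class V E u \<equiv> antipodal_rel V E `` {u}"

lemma antipodal_rel_automorphism:
  assumes "connected_graph V E" and "automorphism V E \<sigma>" and "u \<in> V" "v \<in> V"
  shows "(\<sigma> u, \<sigma> v) \<in> antipodal_rel V E \<longleftrightarrow> (u, v) \<in> antipodal_rel V E"
proof -
  have bij: "bij_betw \<sigma> V V"
    using assms(2) by (simp add: automorphism_def)
  then have "\<sigma> u \<in> V" "\<sigma> v \<in> V" "\<sigma> u = \<sigma> v \<longleftrightarrow> u = v"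
    using assms(3,4) by (auto simp: bij_betw_def inj_on_eq_iff)
  with gdist_automorphism[OF assms] assms(3,4) show ?thesis
    by (simp add: antipodal_rel_def)
qed

lemma automorphism_folded:
  assumes conn: "connected_graph V E" and eq: "equiv V (antipodal_rel V E)"
    and aut: "automorphism V E \<sigma>"
  shows "automorphism (folded_vertices V E) (folded_adj V E) (image \<sigma>)"
proof -
  have bij: "bij_betw \<sigma> V V"
    using aut by (simp add: automorphism_def)
  have inv: "(\<sigma> u, \<sigma> v) \<in> antipodal_rel V E \<longleftrightarrow> (u, v) \<in> antipodal_rel V E"
    if "u \<in> V" "v \<in> V" for u v
    using antipodal_rel_automorphism[OF conn aut that] .
  have quot: "bij_betw (image \<sigma>) (folded_vertices V E) (folded_vertices V E)"
    unfolding folded_vertices_def using bij_betw_image_quotient[OF eq bij inv] .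
  have "folded_adj V E C D \<longleftrightarrow> folded_adj V E (\<sigma> ` C) (\<sigma> ` D)"
    if "C \<in> folded_vertices V E" "D \<in> folded_vertices V E" for C D
  proof -
    have "C \<subseteq> V" "D \<subseteq> V"
      using that in_quotient_imp_subset[OF eq] by (auto simp: folded_vertices_def)
    then have "(\<exists>u\<in>C. \<exists>v\<in>D. E u v) \<longleftrightarrow> (\<exists>u\<in>\<sigma> ` C. \<exists>v\<in>\<sigma> ` D. E u v)"
      using aut unfolding automorphism_def by blast
    then show ?thesis
      using that bij_betw_apply[OF quot] by (auto simp: folded_adj_def)
  qed
  with quot show ?thesis
    by (simp add: automorphism_def)
qed

text \<open>
  A diametral geodesic without its last vertex has the length of \<open>ps\<close>; an automorphism maps it
  onto \<open>ps\<close> and carries its last edge along.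
\<close>

lemma geodesic_extends_to_diameter:
  assumes gr: "graph V E" and gt: "geodesic_transitive V E"
    and ps: "geodesic V E ps" "length ps = diameter V E"
  obtains b where "E (last ps) b" "gdist V E (hd ps) b = diameter V E"
proof -
  have conn: "connected_graph V E" and "finite V" "V \<noteq> {}"
    using gr by (simp_all add: graph_def)
  obtain a b where ab: "a \<in> V" "b \<in> V" "gdist V E a b = diameter V E"
    using diameter_attained[OF \<open>finite V\<close> \<open>V \<noteq> {}\<close>] .
  obtain qs where qs: "geodesic V E qs" "hd qs = a" "last qs = b" "length qs = gdist V E a b + 1"
    by (rule shortest_geodesic_exists[OF conn ab(1,2)])
  define qs' where "qs' = butlast qs"
  have "qs \<noteq> []"
    using qs(4) by auto
  then have qs_eq: "qs = qs' @ [b]"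
    using qs(3) unfolding qs'_def by (metis append_butlast_last_id)
  have "length qs' = length ps"
    using qs(4) qs_eq ab(3) ps(2) by simp
  moreover have "ps \<noteq> []"
    using ps(1) by (auto simp: geodesic_def)
  ultimately have "qs' \<noteq> []"
    by auto
  have "geodesic V E qs'"
    using geodesic_append_left[OF conn] qs(1) qs_eq \<open>qs' \<noteq> []\<close> by metis
  have "walk V E (qs' @ [b])"
    using qs(1) qs_eq by (simp add: geodesic_def)
  then have "E (last qs') b" "last qs' \<in> V"
    using walk_append[OF \<open>qs' \<noteq> []\<close>, of "[b]"] walk_last_in by auto
  obtain \<sigma> where \<sigma>: "automorphism V E \<sigma>" "map \<sigma> qs' = ps"
    using gt \<open>geodesic V E qs'\<close> ps(1) \<open>length qs' = length ps\<close>
    unfolding geodesic_transitive_def by blast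
  have "last ps = \<sigma> (last qs')" "hd ps = \<sigma> a"
    using \<sigma>(2) \<open>qs' \<noteq> []\<close> qs(2) qs_eq by (auto simp: last_map hd_map)
  moreover have "E (\<sigma> (last qs')) (\<sigma> b)"
    using \<sigma>(1) \<open>E (last qs') b\<close> \<open>last qs' \<in> V\<close> ab(2) by (simp add: automorphism_def)
  moreover have "gdist V E (\<sigma> a) (\<sigma> b) = diameter V E"
    using gdist_automorphism[OF conn \<sigma>(1) ab(1,2)] ab(3) by simp
  ultimately show ?thesis
    using that by simp
qed

lemma antipodal_neighbour_gdist:
  assumes gr: "graph V E" and ap: "antipodal V E"
    and xu: "gdist V E x u = diameter V E" and "E x y" and "u \<in> V"
  shows "gdist V E y u = diameter V E - 1"
proof -
  have conn: "connected_graph V E" and "finite V"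
    using gr by (simp_all add: graph_def)
  have "x \<in> V" "y \<in> V" "x \<noteq> y"
    using graph_adjD[OF gr \<open>E x y\<close>] by simp_all
  have "gdist V E x y \<le> 1"
    using gdist_adj_le_1 \<open>x \<in> V\<close> \<open>y \<in> V\<close> \<open>E x y\<close> .
  moreover have "gdist V E x u \<le> gdist V E x y + gdist V E y u"
    using gdist_triangle[OF conn \<open>x \<in> V\<close> \<open>y \<in> V\<close> \<open>u \<in> V\<close>] .
  moreover have "gdist V E y u \<le> diameter V E"
    using gdist_le_diameter[OF \<open>finite V\<close> \<open>y \<in> V\<close> \<open>u \<in> V\<close>] .
  moreover have "gdist V E y u \<noteq> diameter V E"
  proof
    assume "gdist V E y u = diameter V E"
    then have "(x, u) \<in> antipodal_rel V E" "(y, u) \<in> antipodal_rel V E"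
      using xu \<open>x \<in> V\<close> \<open>y \<in> V\<close> \<open>u \<in> V\<close> by (simp_all add: antipodal_rel_def)
    moreover have "sym (antipodal_rel V E)" "trans (antipodal_rel V E)"
      using ap by (simp_all add: antipodal_def equiv_def)
    ultimately have "(x, y) \<in> antipodal_rel V E"
      by (metis symD transD)
    moreover have "2 \<le> diameter V E"
      using ap by (simp add: antipodal_def)
    ultimately show False
      using \<open>x \<noteq> y\<close> \<open>gdist V E x y \<le> 1\<close> by (simp add: antipodal_rel_def)
  qed
  ultimately show ?thesis
    using xu by linarith
qed

text \<open>
  For \<open>x \<noteq> u\<close> the neighbour \<open>y\<close> of \<open>x\<close> lies at distance \<open>diameter V E - 1\<close> from \<open>u\<close>, so a geodesic
  from \<open>y\<close> to \<open>u\<close> extends along an edge at \<open>u\<close> to an antipode of \<open>y\<close>.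
\<close>

lemma antipodal_edge_lift:
  assumes gr: "graph V E" and gt: "geodesic_transitive V E" and ap: "antipodal V E"
    and xu: "(x, u) \<in> antipodal_rel V E" and "E x y"
  obtains v where "E u v" "(y, v) \<in> antipodal_rel V E"
proof (cases "x = u")
  case True
  have "y \<in> V"
    using graph_adjD[OF gr \<open>E x y\<close>] by simp
  with True \<open>E x y\<close> show ?thesis
    using that by (simp add: antipodal_rel_def)
next
  case False
  have conn: "connected_graph V E"
    using gr by (simp add: graph_def)
  have "y \<in> V" "u \<in> V"
    using graph_adjD[OF gr \<open>E x y\<close>] xu by (simp_all add: antipodal_rel_def)
  have "gdist V E x u = diameter V E"
    using xu False by (simp add: antipodal_rel_def)
  then have "gdist V E y u = diameter V E - 1"
    using antipodal_neighbour_gdist[OF gr ap _ \<open>E x y\<close> \<open>u \<in> V\<close>] by simp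
  obtain ps where ps: "geodesic V E ps" "hd ps = y" "last ps = u"
      "length ps = gdist V E y u + 1"
    by (rule shortest_geodesic_exists[OF conn \<open>y \<in> V\<close> \<open>u \<in> V\<close>])
  moreover have "2 \<le> diameter V E"
    using ap by (simp add: antipodal_def)
  ultimately have "length ps = diameter V E"
    using \<open>gdist V E y u = diameter V E - 1\<close> by simp
  then obtain v where "E (last ps) v" "gdist V E (hd ps) v = diameter V E"
    using geodesic_extends_to_diameter[OF gr gt ps(1)] by blast
  moreover have "v \<in> V"
    using graph_adjD[OF gr \<open>E (last ps) v\<close>] by simp
  ultimately show ?thesis
    using that ps(2,3) \<open>y \<in> V\<close> by (simp add: antipodal_rel_def)
qed

lemma walk_project_folded:
  assumes eq: "equiv V (antipodal_rel V E)" and "walk V E zs"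
  shows "walk (folded_vertices V E) (folded_adj V E) (map (antipodal_class V E) zs)"
  using assms(2)
proof (induction zs rule: induct_list012)
  case (2 x)
  then show ?case
    by (simp add: folded_vertices_def quotientI)
next
  case (3 x y zs)
  then have "x \<in> V" "E x y" "walk V E (y # zs)"
    by auto
  moreover have "y \<in> V"
    using walk_hd_in[OF \<open>walk V E (y # zs)\<close>] by simp
  ultimately have "folded_adj V E (antipodal_class V E x) (antipodal_class V E y)"
    using equiv_class_self[OF eq] by (auto simp: folded_adj_def folded_vertices_def quotientI)
  with 3 \<open>x \<in> V\<close> \<open>walk V E (y # zs)\<close> show ?case
    by (simp add: folded_vertices_def quotientI)
qed simp

lemma folded_walk_lift:
  assumes gr: "graph V E" and gt: "geodesic_transitive V E" and ap: "antipodal V E"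
    and "walk (folded_vertices V E) (folded_adj V E) Cs" and "u \<in> hd Cs"
  shows "\<exists>us. walk V E us \<and> hd us = u \<and> map (antipodal_class V E) us = Cs"
proof -
  have eq: "equiv V (antipodal_rel V E)"
    using ap by (simp add: antipodal_def)
  show ?thesis
    using assms(4,5)
  proof (induction Cs arbitrary: u rule: induct_list012)
    case (2 C)
    then have "C \<in> V // antipodal_rel V E"
      by (simp add: folded_vertices_def)
    with 2 show ?case
      using quotient_eq_class[OF eq] in_quotient_imp_subset[OF eq]
      by (intro exI[of _ "[u]"]) auto
  next
    case (3 C D Cs)
    then have C: "C \<in> V // antipodal_rel V E" "u \<in> C"
      and "folded_adj V E C D" and walk: "walk (folded_vertices V E) (folded_adj V E) (D # Cs)"
      by (auto simp: folded_vertices_def)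
    then obtain x y where "x \<in> C" "y \<in> D" "E x y" and D: "D \<in> V // antipodal_rel V E"
      by (auto simp: folded_adj_def folded_vertices_def)
    have "(x, u) \<in> antipodal_rel V E"
      using in_quotient_imp_in_rel[OF eq C(1)] \<open>x \<in> C\<close> C(2) by blast
    then obtain v where "E u v" "(y, v) \<in> antipodal_rel V E"
      using antipodal_edge_lift[OF gr gt ap _ \<open>E x y\<close>] by blast
    then have "v \<in> D"
      using in_quotient_imp_closed[OF eq D \<open>y \<in> D\<close>] by blast
    then obtain us where us: "walk V E us" "hd us = v" "map (antipodal_class V E) us = D # Cs"
      using "3.IH"(2)[OF walk, of v] by auto
    then obtain us' where "us = v # us'"
      by (cases us) auto
    moreover have "u \<in> V" "C = antipodal_class V E u"
      using in_quotient_imp_subset[OF eq C(1)] quotient_eq_class[OF eq C(1)] C(2) by auto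
    ultimately show ?case
      using us \<open>E u v\<close> by (intro exI[of _ "u # us"]) auto
  qed simp
qed

lemma gdist_folded_le:
  assumes conn: "connected_graph V E" and eq: "equiv V (antipodal_rel V E)"
    and "u \<in> V" "v \<in> V"
  shows "gdist (folded_vertices V E) (folded_adj V E) (antipodal_class V E u) (antipodal_class V E v)
    \<le> gdist V E u v"
proof -
  obtain zs where zs: "geodesic V E zs" "hd zs = u" "last zs = v" "length zs = gdist V E u v + 1"
    by (rule shortest_geodesic_exists[OF conn assms(3,4)])
  then have "zs \<noteq> []"
    by auto
  with gdist_le_walk[OF walk_project_folded[OF eq], of zs] zs show ?thesis
    by (simp add: geodesic_def hd_map last_map)
qed

lemma geodesic_folded_lift:
  assumes gr: "graph V E" and gt: "geodesic_transitive V E" and ap: "antipodal V E"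
    and Cs: "geodesic (folded_vertices V E) (folded_adj V E) Cs"
  shows "\<exists>us. geodesic V E us \<and> map (antipodal_class V E) us = Cs"
proof -
  have eq: "equiv V (antipodal_rel V E)" and conn: "connected_graph V E"
    using ap gr by (simp_all add: antipodal_def graph_def)
  have walk: "walk (folded_vertices V E) (folded_adj V E) Cs"
    using Cs by (simp add: geodesic_def)
  then have "hd Cs \<in> V // antipodal_rel V E"
    using walk_hd_in by (fastforce simp: folded_vertices_def)
  then obtain u where "u \<in> hd Cs"
    using in_quotient_imp_non_empty[OF eq] by blast
  then obtain us where us: "walk V E us" "map (antipodal_class V E) us = Cs"
    using folded_walk_lift[OF gr gt ap walk] by blast
  then have "us \<noteq> []"
    by auto
  have "length Cs - 1 = gdist (folded_vertices V E) (folded_adj V E) (hd Cs) (last Cs)"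
    using Cs by (simp add: geodesic_def)
  also have "\<dots> \<le> gdist V E (hd us) (last us)"
    using gdist_folded_le[OF conn eq walk_hd_in[OF us(1)] walk_last_in[OF us(1)]] us(2) \<open>us \<noteq> []\<close>
    by (auto simp: hd_map last_map)
  finally have "geodesic V E us"
    using gdist_le_walk[OF us(1)] us by (auto simp: geodesic_def)
  with us(2) show ?thesis
    by blast
qed

theorem geodesic_transitive_folded:
  assumes gr: "graph V E" and gt: "geodesic_transitive V E" and ap: "antipodal V E"
  shows "geodesic_transitive (folded_vertices V E) (folded_adj V E)"
  unfolding geodesic_transitive_def
proof (intro allI impI, elim conjE)
  fix Cs Ds
  assume Cs: "geodesic (folded_vertices V E) (folded_adj V E) Cs"
    and Ds: "geodesic (folded_vertices V E) (folded_adj V E) Ds" and "length Cs = length Ds"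
  have eq: "equiv V (antipodal_rel V E)" and conn: "connected_graph V E"
    using ap gr by (simp_all add: antipodal_def graph_def)
  obtain us where us: "geodesic V E us" "map (antipodal_class V E) us = Cs"
    using geodesic_folded_lift[OF gr gt ap Cs] by blast
  obtain vs where vs: "geodesic V E vs" "map (antipodal_class V E) vs = Ds"
    using geodesic_folded_lift[OF gr gt ap Ds] by blast
  obtain \<sigma> where \<sigma>: "automorphism V E \<sigma>" "map \<sigma> us = vs"
    using gt us(1) vs(1) \<open>length Cs = length Ds\<close> us(2) vs(2)
    unfolding geodesic_transitive_def by (metis length_map)
  have bij: "bij_betw \<sigma> V V"
    using \<sigma>(1) by (simp add: automorphism_def)
  have image_class: "\<sigma> ` antipodal_class V E a = antipodal_class V E (\<sigma> a)" if "a \<in> V" for a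
    using image_equiv_class[OF eq bij antipodal_rel_automorphism[OF conn \<sigma>(1)] that] .
  have "set us \<subseteq> V"
    using us(1) walk_set by (auto simp: geodesic_def)
  have "map (image \<sigma>) Cs = map (\<lambda>z. \<sigma> ` antipodal_class V E z) us"
    using us(2) by auto
  also have "\<dots> = map (\<lambda>z. antipodal_class V E (\<sigma> z)) us"
    using \<open>set us \<subseteq> V\<close> image_class by (intro map_cong) auto
  also have "\<dots> = Ds"
    using \<sigma>(2) vs(2) by auto
  finally have "map (image \<sigma>) Cs = Ds" .
  with automorphism_folded[OF conn eq \<sigma>(1)]
  show "\<exists>\<tau>. automorphism (folded_vertices V E) (folded_adj V E) \<tau> \<and> map \<tau> Cs = Ds"
    by blast
qed

theorem lemma3p2:
  fixes V :: "'a set" and E :: "'a \<Rightarrow> 'a \<Rightarrow> bool"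
  assumes "graph V E" and "geodesic_transitive V E" and "imprimitive V E"
  shows "(bipartite V E \<longrightarrow>
            (\<forall>A B. bipartition V E A B \<longrightarrow> geodesic_transitive A (halved_adj V E A)))
       \<and> (antipodal V E \<longrightarrow>
            geodesic_transitive (folded_vertices V E) (folded_adj V E))"
  using geodesic_transitive_halved[OF assms(1,2)] geodesic_transitive_folded[OF assms(1,2)]
  by blast

end
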